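(* Let $N\ge 1$. Make the following two assumptions. (Exchangeability.) For every permutation $\sigma$ of $\{1,\dots,N\}$, the family $$\big((\bar a_{l-1})_{b,\sigma(m)}\big)_{l,b,m}\ \text{together with}\ \big(D^{(\sigma(n))}_{l,l'}(a,\sigma(m);c,\sigma(m'))\big)_{l,l',a,c,n,m,m'}$$ has the same joint distribution as the unpermuted family $\big((\bar a_{l-1})_{b,m}\big)$, $\big(D^{(n)}_{l,l'}(a,m;c,m')\big)$. (Factorization.) For all $l,l',a,b,c,d$ and all permutations $\pi,\pi'$ of $\{1,\dots,N\}$, $$\mathbb{E}\Big[\mathbb{E}_n\big[(\bar a_{l-1})_{b,\pi(n)}(\bar a_{l'-1})_{d,\pi'(n)}\,D^{(n)}_{l,l'}(a,\pi(n);c,\pi'(n))\big]\Big]=\mathbb{E}\Big[\mathbb{E}_n\big[(\bar a_{l-1})_{b,\pi(n)}(\bar a_{l'-1})_{d,\pi'(n)}\big]\Big]\cdot\mathbb{E}\Big[\mathbb{E}_n\big[D^{(n)}_{l,l'}(a,\pi(n);c,\pi'(n))\big]\Big].$$ Under these assumptions, $$H=\bar A*\mathcal{H}'+\frac{1}{\max(N-1,1)}\big(N\bar A'-\bar A\big)*(\mathcal{H}''-\mathcal{H}').$$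
   Context: Setting. Fix layer widths $C_0,\dots,C_L$ and a mini-batch size $N$. For $l=1,\dots,L$, let $\bar a_{l-1}\in\mathbb{R}^{(C_{l-1}+1)\times N}$ be random matrices; these are the activations of layer $l-1$ with a row of ones appended. For $n,m,m'\in\{1,\dots,N\}$, $l,l'\in\{1,\dots,L\}$, $a\in\{1,\dots,C_l\}$ and $c\in\{1,\dots,C_{l'}\}$, let $D^{(n)}_{l,l'}(a,m;c,m')$ be real random variables; these stand for the second derivatives $\partial^2\mathcal{L}_n/\partial(h_l)_{a,m}\partial(h_{l'})_{c,m'}$ of the $n$-th example's loss with respect to pre-activations. All these random variables are defined on a common probability space (the random sampling of a mini-batch with its labels). $\mathbb{E}$ denotes expectation over that randomness. $\mathbb{E}_n[\cdot]=\frac1N\sum_{n=1}^N[\cdot]$ is the average over the example index. All expectations appearing are assumed finite. Block matrices. Define block matrices whose $(l,l')$ blocks are as follows, with $\{M\}_{l,l'}$ denoting block $(l,l')$: - $(\{\bar A\}_{l,l'})_{b,d}=\mathbb{E}\big[\mathbb{E}_n[(\bar a_{l-1})_{b,n}(\bar a_{l'-1})_{d,n}]\big]$; - $(\{\bar A'\}_{l,l'})_{b,d}=\mathbb{E}\big[\mathbb{E}_n[(\bar a_{l-1})_{b,n}]\,\mathbb{E}_n[(\bar a_{l'-1})_{d,n}]\big]$; - $(\{\mathcal{H}'\}_{l,l'})_{a,c}=\mathbb{E}\big[\mathbb{E}_n[\sum_{m}D^{(n)}_{l,l'}(a,m;c,m)]\big]$; - $(\{\mathcal{H}''\}_{l,l'})_{a,c}=\mathbb{E}\big[\mathbb{E}_n[\sum_{m,m'}D^{(n)}_{l,l'}(a,m;c,m')]\big]$.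 So $\{\bar A\}_{l,l'}$ and $\{\bar A'\}_{l,l'}$ are $(C_{l-1}+1)\times(C_{l'-1}+1)$, and $\{\mathcal{H}'\}_{l,l'}$ and $\{\mathcal{H}''\}_{l,l'}$ are $C_l\times C_{l'}$. Let $H$ be the block matrix whose block $(l,l')$ has size $C_l(C_{l-1}+1)\times C_{l'}(C_{l'-1}+1)$. Its entry in row $(b-1)C_l+a$ and column $(d-1)C_{l'}+c$ is $$\mathbb{E}\Big[\mathbb{E}_n\Big[\sum_{m,m'}(\bar a_{l-1})_{b,m}(\bar a_{l'-1})_{d,m'}D^{(n)}_{l,l'}(a,m;c,m')\Big]\Big].$$ This is the expected Hessian of the averaged loss with respect to the column-major vectorized weights $\mathrm{vec}(W_l)$. Khatri–Rao product. For two block matrices $P,Q$ with the same block layout, $P*Q$ is the block matrix with blocks $\{P*Q\}_{l,l'}=\{P\}_{l,l'}\otimes\{Q\}_{l,l'}$, where $\otimes$ is the Kronecker product. *)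

theory Defs
  imports "HOL-Probability.Probability"
begin

text \<open>Conventions.
  abar l b m \<omega>  stands for the entry (b,m) of the augmented activation matrix of layer l-1,
     with 1 \<le> b \<le> C (l-1) + 1 and 1 \<le> m \<le> N.
  D n l l' a m c m' \<omega>  stands for D^(n)_{l,l'}(a,m;c,m').
  Block matrices are functions  l l' i j  with 1-based row/column indices.\<close>

definition En :: "nat \<Rightarrow> (nat \<Rightarrow> real) \<Rightarrow> real" where
  "En N f = (1 / real N) * (\<Sum>n = 1..N. f n)"

definition Abar_blk :: "'w measure \<Rightarrow> nat \<Rightarrow> (nat \<Rightarrow> nat \<Rightarrow> nat \<Rightarrow> 'w \<Rightarrow> real)
    \<Rightarrow> nat \<Rightarrow> nat \<Rightarrow> nat \<Rightarrow> nat \<Rightarrow> real" where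
  "Abar_blk M N abar l l' b d =
     (LINT \<omega>|M. En N (\<lambda>n. abar l b n \<omega> * abar l' d n \<omega>))"

definition Abar'_blk :: "'w measure \<Rightarrow> nat \<Rightarrow> (nat \<Rightarrow> nat \<Rightarrow> nat \<Rightarrow> 'w \<Rightarrow> real)
    \<Rightarrow> nat \<Rightarrow> nat \<Rightarrow> nat \<Rightarrow> nat \<Rightarrow> real" where
  "Abar'_blk M N abar l l' b d =
     (LINT \<omega>|M. En N (\<lambda>n. abar l b n \<omega>) * En N (\<lambda>n. abar l' d n \<omega>))"

definition H'_blk :: "'w measure \<Rightarrow> nat
    \<Rightarrow> (nat \<Rightarrow> nat \<Rightarrow> nat \<Rightarrow> nat \<Rightarrow> nat \<Rightarrow> nat \<Rightarrow> nat \<Rightarrow> 'w \<Rightarrow> real)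
    \<Rightarrow> nat \<Rightarrow> nat \<Rightarrow> nat \<Rightarrow> nat \<Rightarrow> real" where
  "H'_blk M N D l l' a c =
     (LINT \<omega>|M. En N (\<lambda>n. \<Sum>m = 1..N. D n l l' a m c m \<omega>))"

definition H''_blk :: "'w measure \<Rightarrow> nat
    \<Rightarrow> (nat \<Rightarrow> nat \<Rightarrow> nat \<Rightarrow> nat \<Rightarrow> nat \<Rightarrow> nat \<Rightarrow> nat \<Rightarrow> 'w \<Rightarrow> real)
    \<Rightarrow> nat \<Rightarrow> nat \<Rightarrow> nat \<Rightarrow> nat \<Rightarrow> real" where
  "H''_blk M N D l l' a c =
     (LINT \<omega>|M. En N (\<lambda>n. \<Sum>m = 1..N. \<Sum>m' = 1..N. D n l l' a m c m' \<omega>))"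

text \<open>Entry of the expected Hessian block (l,l') at row (b-1)C_l+a, column (d-1)C_{l'}+c.\<close>
definition Hess_entry :: "'w measure \<Rightarrow> nat \<Rightarrow> (nat \<Rightarrow> nat \<Rightarrow> nat \<Rightarrow> 'w \<Rightarrow> real)
    \<Rightarrow> (nat \<Rightarrow> nat \<Rightarrow> nat \<Rightarrow> nat \<Rightarrow> nat \<Rightarrow> nat \<Rightarrow> nat \<Rightarrow> 'w \<Rightarrow> real)
    \<Rightarrow> nat \<Rightarrow> nat \<Rightarrow> nat \<Rightarrow> nat \<Rightarrow> nat \<Rightarrow> nat \<Rightarrow> real" where
  "Hess_entry M N abar D l l' a b c d =
     (LINT \<omega>|M. En N (\<lambda>n. \<Sum>m = 1..N. \<Sum>m' = 1..N.
        abar l b m \<omega> * abar l' d m' \<omega> * D n l l' a m c m' \<omega>))"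

definition Hess_blk :: "'w measure \<Rightarrow> nat \<Rightarrow> (nat \<Rightarrow> nat) \<Rightarrow> (nat \<Rightarrow> nat \<Rightarrow> nat \<Rightarrow> 'w \<Rightarrow> real)
    \<Rightarrow> (nat \<Rightarrow> nat \<Rightarrow> nat \<Rightarrow> nat \<Rightarrow> nat \<Rightarrow> nat \<Rightarrow> nat \<Rightarrow> 'w \<Rightarrow> real)
    \<Rightarrow> nat \<Rightarrow> nat \<Rightarrow> nat \<Rightarrow> nat \<Rightarrow> real" where
  "Hess_blk M N C abar D l l' i j =
     Hess_entry M N abar D l l'
       ((i - 1) mod C l + 1) ((i - 1) div C l + 1)
       ((j - 1) mod C l' + 1) ((j - 1) div C l' + 1)"

definition kron :: "(nat \<Rightarrow> nat \<Rightarrow> real) \<Rightarrow> (nat \<Rightarrow> nat \<Rightarrow> real) \<Rightarrow> nat \<Rightarrow> nat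
    \<Rightarrow> nat \<Rightarrow> nat \<Rightarrow> real" where
  "kron P Q qr qc i j =
     P ((i - 1) div qr + 1) ((j - 1) div qc + 1) * Q ((i - 1) mod qr + 1) ((j - 1) mod qc + 1)"

text \<open>Khatri-Rao (blockwise Kronecker) product; block (l,l') of Q has size C l x C l'.\<close>
definition khatri_rao :: "(nat \<Rightarrow> nat) \<Rightarrow> (nat \<Rightarrow> nat \<Rightarrow> nat \<Rightarrow> nat \<Rightarrow> real)
    \<Rightarrow> (nat \<Rightarrow> nat \<Rightarrow> nat \<Rightarrow> nat \<Rightarrow> real) \<Rightarrow> nat \<Rightarrow> nat \<Rightarrow> nat \<Rightarrow> nat \<Rightarrow> real" where
  "khatri_rao C P Q l l' = kron (P l l') (Q l l') (C l) (C l')"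

definition fam_idx :: "nat \<Rightarrow> nat \<Rightarrow> (nat \<Rightarrow> nat)
    \<Rightarrow> ((nat \<times> nat \<times> nat) + (nat \<times> nat \<times> nat \<times> nat \<times> nat \<times> nat \<times> nat)) set" where
  "fam_idx L N C =
     Inl ` {(l, b, m). l \<in> {1..L} \<and> b \<in> {1..C (l - 1) + 1} \<and> m \<in> {1..N}} \<union>
     Inr ` {(l, l', a, c, n, m, m'). l \<in> {1..L} \<and> l' \<in> {1..L} \<and> a \<in> {1..C l} \<and>
              c \<in> {1..C l'} \<and> n \<in> {1..N} \<and> m \<in> {1..N} \<and> m' \<in> {1..N}}"

definition fam :: "nat \<Rightarrow> nat \<Rightarrow> (nat \<Rightarrow> nat) \<Rightarrow> (nat \<Rightarrow> nat \<Rightarrow> nat \<Rightarrow> 'w \<Rightarrow> real)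
    \<Rightarrow> (nat \<Rightarrow> nat \<Rightarrow> nat \<Rightarrow> nat \<Rightarrow> nat \<Rightarrow> nat \<Rightarrow> nat \<Rightarrow> 'w \<Rightarrow> real) \<Rightarrow> (nat \<Rightarrow> nat)
    \<Rightarrow> 'w \<Rightarrow> ((nat \<times> nat \<times> nat) + (nat \<times> nat \<times> nat \<times> nat \<times> nat \<times> nat \<times> nat)) \<Rightarrow> real" where
  "fam L N C abar D \<sigma> \<omega> =
     (\<lambda>x\<in>fam_idx L N C. case x of
        Inl (l, b, m) \<Rightarrow> abar l b (\<sigma> m) \<omega>
      | Inr (l, l', a, c, n, m, m') \<Rightarrow> D (\<sigma> n) l l' a (\<sigma> m) c (\<sigma> m') \<omega>)"

end

theory Submission
  imports Defs
begin

text \<open>For a fixed example n, the N^2 pairs (m, m') are exactly the pairs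
  (\<sigma>_k n, \<sigma>_k' n), where \<sigma>_0, ..., \<sigma>_(N-1) are the cyclic shifts of {1..N}.
  Hence the double sum in a Hessian entry splits into N^2 averages over pairs of permutations,
  each of which factorizes by assumption. By exchangeability the second moment
  E[a_m a'_m'] takes a single value off the diagonal, namely (N Abar' - Abar)/(N - 1), while the
  diagonal average Abar is permutation invariant. So the activation factor is Abar for k = k'
  and (N Abar' - Abar)/(N - 1) otherwise, and regrouping the shifted averages of D gives
  H' and H'' - H'.\<close>

lemma bij_betw_if_inj_on_card_eq:
  assumes "inj_on f A" "f ` A \<subseteq> B" "finite B" "card A = card B"
  shows "bij_betw f A B"
  using assms by (metis bij_betw_imageI card_image card_subset_eq)

lemma add_mod_left_cancel_nat:
  fixes x k k' N :: nat
  assumes "(x + k) mod N = (x + k') mod N" "k < N" "k' < N"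
  shows "k = k'"
proof -
  have "int k mod int N = int k' mod int N"
    using assms(1) by (metis add_diff_cancel_left' mod_diff_left_eq of_nat_add of_nat_mod)
  then show ?thesis using assms(2,3) by (simp add: zmod_int[symmetric])
qed

definition cyc_shift :: "nat \<Rightarrow> nat \<Rightarrow> nat \<Rightarrow> nat" where
  "cyc_shift N k n = (if n \<in> {1..N} then (n - 1 + k) mod N + 1 else n)"

lemma cyc_shift_in: "n \<in> {1..N} \<Longrightarrow> cyc_shift N k n \<in> {1..N}"
  unfolding cyc_shift_def by (auto simp: Suc_le_eq)

lemma cyc_shift_permutes:
  assumes "k < N"
  shows "cyc_shift N k permutes {1..N}"
proof (rule bij_imp_permutes)
  show "bij_betw (cyc_shift N k) {1..N} {1..N}"
  proof (rule bij_betw_if_inj_on_card_eq)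
    show "inj_on (cyc_shift N k) {1..N}"
    proof (rule inj_onI)
      fix n n' assume n: "n \<in> {1..N}" and n': "n' \<in> {1..N}"
        and "cyc_shift N k n = cyc_shift N k n'"
      then have "(k + (n - 1)) mod N = (k + (n' - 1)) mod N"
        by (simp add: cyc_shift_def add.commute)
      then have "n - 1 = n' - 1"
        by (rule add_mod_left_cancel_nat) (use n n' in auto)
      with n n' show "n = n'" by auto
    qed
    show "cyc_shift N k ` {1..N} \<subseteq> {1..N}"
      using cyc_shift_in by blast
  qed simp_all
qed (simp only: cyc_shift_def if_False)

lemma bij_betw_cyc_shift_offset:
  assumes n: "n \<in> {1..N}"
  shows "bij_betw (\<lambda>k. cyc_shift N k n) {..<N} {1..N}"
proof (rule bij_betw_if_inj_on_card_eq)
  show "inj_on (\<lambda>k. cyc_shift N k n) {..<N}"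
  proof (rule inj_onI)
    fix k k' assume "k \<in> {..<N}" "k' \<in> {..<N}" "cyc_shift N k n = cyc_shift N k' n"
    then show "k = k'"
      using n add_mod_left_cancel_nat[of "n - 1" k N k'] by (simp add: cyc_shift_def)
  qed
  show "(\<lambda>k. cyc_shift N k n) ` {..<N} \<subseteq> {1..N}"
    using cyc_shift_in[OF n] by blast
qed simp_all

lemma cyc_shift_offset_neq:
  "n \<in> {1..N} \<Longrightarrow> k < N \<Longrightarrow> k' < N \<Longrightarrow> k \<noteq> k' \<Longrightarrow> cyc_shift N k n \<noteq> cyc_shift N k' n"
  using bij_betw_imp_inj_on[OF bij_betw_cyc_shift_offset] by (fastforce dest: inj_onD)

lemma sum_reindex_cyc_shift:
  "n \<in> {1..N} \<Longrightarrow> (\<Sum>m = 1..N. g m) = (\<Sum>k<N. g (cyc_shift N k n))"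
  using sum.reindex_bij_betw[OF bij_betw_cyc_shift_offset, of n N g] by simp

lemma permutes_exists_pair:
  fixes m m' N :: nat
  assumes m: "m \<in> {1..N}" and m': "m' \<in> {1..N}" and "m \<noteq> m'"
  shows "\<exists>\<sigma>. \<sigma> permutes {1..N} \<and> \<sigma> 1 = m \<and> \<sigma> 2 = m'"
proof -
  define \<tau> where "\<tau> = Transposition.transpose (1::nat) m"
  define \<sigma> where "\<sigma> = Transposition.transpose m' (\<tau> 2) \<circ> \<tau>"
  have "N \<ge> 2" using assms by auto
  have \<tau>2: "\<tau> 2 \<in> {1, 2}" "\<tau> 2 \<noteq> m" unfolding \<tau>_def by (auto simp: Transposition.transpose_def)
  have "\<tau> permutes {1..N}" unfolding \<tau>_def using m \<open>N \<ge> 2\<close> by (intro permutes_swap_id) auto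
  moreover have "Transposition.transpose m' (\<tau> 2) permutes {1..N}"
    using \<tau>2(1) \<open>N \<ge> 2\<close> m' by (intro permutes_swap_id) auto
  ultimately have "\<sigma> permutes {1..N}" unfolding \<sigma>_def by (rule permutes_compose)
  moreover have "\<sigma> 1 = m" "\<sigma> 2 = m'"
    using \<tau>2 \<open>m \<noteq> m'\<close> unfolding \<sigma>_def by (auto simp: \<tau>_def Transposition.transpose_def)
  ultimately show ?thesis by blast
qed

lemma En_cong: "(\<And>n. n \<in> {1..N} \<Longrightarrow> f n = g n) \<Longrightarrow> En N f = En N g"
  unfolding En_def by (metis sum.cong)

lemma En_const: "N \<ge> 1 \<Longrightarrow> En N (\<lambda>n. c) = c"
  unfolding En_def by simp

lemma En_add: "En N (\<lambda>n. f n + g n) = En N f + En N g"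
  unfolding En_def by (simp add: sum.distrib distrib_left)

lemma En_sum: "En N (\<lambda>n. \<Sum>k\<in>K. g n k) = (\<Sum>k\<in>K. En N (\<lambda>n. g n k))"
  unfolding En_def by (simp add: sum_distrib_left) (rule sum.swap)

lemma En_mult_En: "En N f * En N g = En N (\<lambda>m. En N (\<lambda>m'. f m * g m'))"
  unfolding En_def by (simp add: sum_product sum_distrib_left mult_ac) (rule sum.swap)

lemma En_permute: "\<sigma> permutes {1..N} \<Longrightarrow> En N (\<lambda>n. f (\<sigma> n)) = En N f"
  unfolding En_def using sum.permute[of \<sigma> "{1..N}" f] by (simp add: comp_def)

lemma En_sum_cyc_shift:
  "En N (\<lambda>n. \<Sum>m = 1..N. g n m) = (\<Sum>k<N. En N (\<lambda>n. g n (cyc_shift N k n)))"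
proof -
  have "En N (\<lambda>n. \<Sum>m = 1..N. g n m) = En N (\<lambda>n. \<Sum>k<N. g n (cyc_shift N k n))"
    by (rule En_cong) (rule sum_reindex_cyc_shift)
  then show ?thesis by (simp add: En_sum)
qed

lemma En_sum_sum_cyc_shift:
  "En N (\<lambda>n. \<Sum>m = 1..N. \<Sum>m' = 1..N. g n m m') =
   (\<Sum>k<N. \<Sum>k'<N. En N (\<lambda>n. g n (cyc_shift N k n) (cyc_shift N k' n)))"
proof -
  have "(\<Sum>m = 1..N. \<Sum>m' = 1..N. g n m m') = (\<Sum>k<N. \<Sum>k'<N. g n (cyc_shift N k n) (cyc_shift N k' n))"
    if n: "n \<in> {1..N}" for n
  proof -
    have "(\<Sum>m = 1..N. \<Sum>m' = 1..N. g n m m') = (\<Sum>k<N. \<Sum>m' = 1..N. g n (cyc_shift N k n) m')"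
      by (rule sum_reindex_cyc_shift[OF n])
    also have "\<dots> = (\<Sum>k<N. \<Sum>k'<N. g n (cyc_shift N k n) (cyc_shift N k' n))"
      by (rule sum.cong[OF refl]) (rule sum_reindex_cyc_shift[OF n])
    finally show ?thesis .
  qed
  then have "En N (\<lambda>n. \<Sum>m = 1..N. \<Sum>m' = 1..N. g n m m') =
      En N (\<lambda>n. \<Sum>k<N. \<Sum>k'<N. g n (cyc_shift N k n) (cyc_shift N k' n))"
    by (rule En_cong)
  then show ?thesis by (simp add: En_sum)
qed

lemma offdiag_eq_of_exchangeable:
  fixes p :: "nat \<Rightarrow> nat \<Rightarrow> real"
  assumes exch: "\<And>\<sigma>. \<sigma> permutes {1..N} \<Longrightarrow> p (\<sigma> 1) (\<sigma> 2) = p 1 2"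
    and m: "m \<in> {1..N}" and m': "m' \<in> {1..N}" and "m \<noteq> m'"
  shows "p m m' = (real N * En N (\<lambda>m. En N (p m)) - En N (\<lambda>n. p n n)) / real (max (N - 1) 1)"
proof -
  have offdiag: "p a a' = p 1 2" if "a \<in> {1..N}" "a' \<in> {1..N}" "a \<noteq> a'" for a a'
    using permutes_exists_pair[OF that] exch by blast
  have "N \<ge> 2" using assms by auto
  have row: "(\<Sum>a' = 1..N. p a a') = p a a + real (N - 1) * p 1 2" if a: "a \<in> {1..N}" for a
  proof -
    have "(\<Sum>a' = 1..N. p a a') = p a a + (\<Sum>a' \<in> {1..N} - {a}. p a a')"
      using a by (simp add: sum.remove)
    also have "(\<Sum>a' \<in> {1..N} - {a}. p a a') = (\<Sum>a' \<in> {1..N} - {a}. p 1 2)"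
      by (intro sum.cong refl offdiag) (use a in auto)
    finally show ?thesis using a by simp
  qed
  have "real N * En N (\<lambda>m. En N (p m)) = En N (\<lambda>a. \<Sum>a' = 1..N. p a a')"
    by (simp add: En_def sum_distrib_left)
  also have "\<dots> = En N (\<lambda>a. p a a + real (N - 1) * p 1 2)"
    by (rule En_cong) (rule row)
  also have "\<dots> = En N (\<lambda>n. p n n) + real (N - 1) * p 1 2"
    using \<open>N \<ge> 2\<close> by (simp add: En_add En_const)
  finally show ?thesis
    using \<open>N \<ge> 2\<close> offdiag[OF assms(2-)] by simp
qed

lemma En_sum_sum_factorizing:
  fixes e y :: "nat \<Rightarrow> nat \<Rightarrow> nat \<Rightarrow> real" and p :: "nat \<Rightarrow> nat \<Rightarrow> real"
  assumes fact: "\<And>\<pi> \<pi>'. \<pi> permutes {1..N} \<Longrightarrow> \<pi>' permutes {1..N} \<Longrightarrow>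
      En N (\<lambda>n. e n (\<pi> n) (\<pi>' n)) = En N (\<lambda>n. p (\<pi> n) (\<pi>' n)) * En N (\<lambda>n. y n (\<pi> n) (\<pi>' n))"
    and offdiag: "\<And>m m'. m \<in> {1..N} \<Longrightarrow> m' \<in> {1..N} \<Longrightarrow> m \<noteq> m' \<Longrightarrow> p m m' = q"
  shows "En N (\<lambda>n. \<Sum>m = 1..N. \<Sum>m' = 1..N. e n m m') =
    En N (\<lambda>n. p n n) * En N (\<lambda>n. \<Sum>m = 1..N. y n m m) +
    q * (En N (\<lambda>n. \<Sum>m = 1..N. \<Sum>m' = 1..N. y n m m') - En N (\<lambda>n. \<Sum>m = 1..N. y n m m))"
proof -
  define P where "P = En N (\<lambda>n. p n n)"
  define Y where "Y k k' = En N (\<lambda>n. y n (cyc_shift N k n) (cyc_shift N k' n))" for k k'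
  have shifted_p: "En N (\<lambda>n. p (cyc_shift N k n) (cyc_shift N k' n)) = (if k = k' then P else q)"
    if k: "k < N" and k': "k' < N" for k k'
  proof (cases "k = k'")
    case True
    then show ?thesis
      unfolding P_def using En_permute[OF cyc_shift_permutes[OF k], of "\<lambda>n. p n n"] by simp
  next
    case False
    have "En N (\<lambda>n. p (cyc_shift N k n) (cyc_shift N k' n)) = En N (\<lambda>n. q)"
      by (intro En_cong offdiag cyc_shift_in cyc_shift_offset_neq False k k')
    then show ?thesis using False k by (simp add: En_const)
  qed
  have "En N (\<lambda>n. \<Sum>m = 1..N. \<Sum>m' = 1..N. e n m m') =
      (\<Sum>k<N. \<Sum>k'<N. En N (\<lambda>n. p (cyc_shift N k n) (cyc_shift N k' n)) * Y k k')"
    unfolding En_sum_sum_cyc_shift Y_def by (intro sum.cong refl fact cyc_shift_permutes) auto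
  also have "\<dots> = (\<Sum>k<N. \<Sum>k'<N. q * Y k k' + (if k = k' then (P - q) * Y k k' else 0))"
    by (intro sum.cong refl) (simp add: shifted_p algebra_simps)
  also have "\<dots> = q * (\<Sum>k<N. \<Sum>k'<N. Y k k') + (P - q) * (\<Sum>k<N. Y k k)"
    by (simp add: sum.distrib sum_distrib_left)
  finally show ?thesis
    unfolding En_sum_sum_cyc_shift[of N y] En_sum_cyc_shift[of N "\<lambda>n m. y n m m"] Y_def P_def
    by (simp add: algebra_simps)
qed

lemma integral_En:
  "(\<And>n. n \<in> {1..N} \<Longrightarrow> integrable M (f n)) \<Longrightarrow>
    (LINT \<omega>|M. En N (\<lambda>n. f n \<omega>)) = En N (\<lambda>n. LINT \<omega>|M. f n \<omega>)"
  unfolding En_def by (simp add: integral_sum)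

lemma integrable_En:
  "(\<And>n. n \<in> {1..N} \<Longrightarrow> integrable M (f n)) \<Longrightarrow> integrable M (\<lambda>\<omega>. En N (\<lambda>n. f n \<omega>))"
  unfolding En_def by (intro integrable_mult_right integrable_sum) auto

lemma integral_En_sum:
  assumes "\<And>n m. n \<in> {1..N} \<Longrightarrow> m \<in> A \<Longrightarrow> integrable M (f n m)"
  shows "(LINT \<omega>|M. En N (\<lambda>n. \<Sum>m\<in>A. f n m \<omega>)) = En N (\<lambda>n. \<Sum>m\<in>A. LINT \<omega>|M. f n m \<omega>)"
proof -
  have "(LINT \<omega>|M. En N (\<lambda>n. \<Sum>m\<in>A. f n m \<omega>)) = En N (\<lambda>n. LINT \<omega>|M. (\<Sum>m\<in>A. f n m \<omega>))"
    by (intro integral_En Bochner_Integration.integrable_sum assms)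
  also have "\<dots> = En N (\<lambda>n. \<Sum>m\<in>A. LINT \<omega>|M. f n m \<omega>)"
    by (intro En_cong Bochner_Integration.integral_sum assms)
  finally show ?thesis .
qed

lemma integral_En_sum_sum:
  assumes "\<And>n m m'. n \<in> {1..N} \<Longrightarrow> m \<in> A \<Longrightarrow> m' \<in> B \<Longrightarrow> integrable M (f n m m')"
  shows "(LINT \<omega>|M. En N (\<lambda>n. \<Sum>m\<in>A. \<Sum>m'\<in>B. f n m m' \<omega>)) =
    En N (\<lambda>n. \<Sum>m\<in>A. \<Sum>m'\<in>B. LINT \<omega>|M. f n m m' \<omega>)"
proof -
  have "(LINT \<omega>|M. En N (\<lambda>n. \<Sum>m\<in>A. \<Sum>m'\<in>B. f n m m' \<omega>)) =
      En N (\<lambda>n. \<Sum>m\<in>A. LINT \<omega>|M. (\<Sum>m'\<in>B. f n m m' \<omega>))"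
    by (intro integral_En_sum Bochner_Integration.integrable_sum assms)
  also have "\<dots> = En N (\<lambda>n. \<Sum>m\<in>A. \<Sum>m'\<in>B. LINT \<omega>|M. f n m m' \<omega>)"
    by (intro En_cong sum.cong[OF refl] Bochner_Integration.integral_sum assms)
  finally show ?thesis .
qed

lemma integral_En_mult_En:
  assumes "\<And>m m'. m \<in> {1..N} \<Longrightarrow> m' \<in> {1..N} \<Longrightarrow> integrable M (\<lambda>\<omega>. X m \<omega> * Y m' \<omega>)"
  shows "(LINT \<omega>|M. En N (\<lambda>n. X n \<omega>) * En N (\<lambda>n. Y n \<omega>)) =
    En N (\<lambda>m. En N (\<lambda>m'. LINT \<omega>|M. X m \<omega> * Y m' \<omega>))"
proof -
  have "(LINT \<omega>|M. En N (\<lambda>n. X n \<omega>) * En N (\<lambda>n. Y n \<omega>)) =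
      (LINT \<omega>|M. En N (\<lambda>m. En N (\<lambda>m'. X m \<omega> * Y m' \<omega>)))"
    by (simp only: En_mult_En)
  also have "\<dots> = En N (\<lambda>m. LINT \<omega>|M. En N (\<lambda>m'. X m \<omega> * Y m' \<omega>))"
    by (rule integral_En) (rule integrable_En, rule assms)
  also have "\<dots> = En N (\<lambda>m. En N (\<lambda>m'. LINT \<omega>|M. X m \<omega> * Y m' \<omega>))"
    by (rule En_cong, rule integral_En) (rule assms)
  finally show ?thesis .
qed

lemma integral_En_double_sum_decomposition:
  fixes X Y :: "nat \<Rightarrow> 'w \<Rightarrow> real" and Z :: "nat \<Rightarrow> nat \<Rightarrow> nat \<Rightarrow> 'w \<Rightarrow> real"
  assumes int_XYZ: "\<And>n m m'. n \<in> {1..N} \<Longrightarrow> m \<in> {1..N} \<Longrightarrow> m' \<in> {1..N} \<Longrightarrow>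
        integrable M (\<lambda>\<omega>. X m \<omega> * Y m' \<omega> * Z n m m' \<omega>)"
    and int_XY: "\<And>m m'. m \<in> {1..N} \<Longrightarrow> m' \<in> {1..N} \<Longrightarrow> integrable M (\<lambda>\<omega>. X m \<omega> * Y m' \<omega>)"
    and int_Z: "\<And>n m m'. n \<in> {1..N} \<Longrightarrow> m \<in> {1..N} \<Longrightarrow> m' \<in> {1..N} \<Longrightarrow> integrable M (Z n m m')"
    and exch: "\<And>\<sigma>. \<sigma> permutes {1..N} \<Longrightarrow>
        (LINT \<omega>|M. X (\<sigma> 1) \<omega> * Y (\<sigma> 2) \<omega>) = (LINT \<omega>|M. X 1 \<omega> * Y 2 \<omega>)"
    and fact: "\<And>\<pi> \<pi>'. \<pi> permutes {1..N} \<Longrightarrow> \<pi>' permutes {1..N} \<Longrightarrow>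
        (LINT \<omega>|M. En N (\<lambda>n. X (\<pi> n) \<omega> * Y (\<pi>' n) \<omega> * Z n (\<pi> n) (\<pi>' n) \<omega>)) =
        (LINT \<omega>|M. En N (\<lambda>n. X (\<pi> n) \<omega> * Y (\<pi>' n) \<omega>)) *
        (LINT \<omega>|M. En N (\<lambda>n. Z n (\<pi> n) (\<pi>' n) \<omega>))"
  shows "(LINT \<omega>|M. En N (\<lambda>n. \<Sum>m = 1..N. \<Sum>m' = 1..N. X m \<omega> * Y m' \<omega> * Z n m m' \<omega>)) =
      (LINT \<omega>|M. En N (\<lambda>n. X n \<omega> * Y n \<omega>)) * (LINT \<omega>|M. En N (\<lambda>n. \<Sum>m = 1..N. Z n m m \<omega>))
      + 1 / real (max (N - 1) 1) *
        ((real N * (LINT \<omega>|M. En N (\<lambda>n. X n \<omega>) * En N (\<lambda>n. Y n \<omega>))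
            - (LINT \<omega>|M. En N (\<lambda>n. X n \<omega> * Y n \<omega>))) *
         ((LINT \<omega>|M. En N (\<lambda>n. \<Sum>m = 1..N. \<Sum>m' = 1..N. Z n m m' \<omega>))
            - (LINT \<omega>|M. En N (\<lambda>n. \<Sum>m = 1..N. Z n m m \<omega>))))"
proof -
  define p where "p m m' = (LINT \<omega>|M. X m \<omega> * Y m' \<omega>)" for m m'
  define y where "y n m m' = (LINT \<omega>|M. Z n m m' \<omega>)" for n m m'
  define e where "e n m m' = (LINT \<omega>|M. X m \<omega> * Y m' \<omega> * Z n m m' \<omega>)" for n m m'
  define q where "q = (real N * En N (\<lambda>m. En N (p m)) - En N (\<lambda>n. p n n)) / real (max (N - 1) 1)"
  have fact_p: "En N (\<lambda>n. e n (\<pi> n) (\<pi>' n)) = En N (\<lambda>n. p (\<pi> n) (\<pi>' n)) * En N (\<lambda>n. y n (\<pi> n) (\<pi>' n))"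
    if \<pi>: "\<pi> permutes {1..N}" and \<pi>': "\<pi>' permutes {1..N}" for \<pi> \<pi>'
  proof -
    have im: "\<pi> n \<in> {1..N}" "\<pi>' n \<in> {1..N}" if "n \<in> {1..N}" for n
      using that permutes_in_image[OF \<pi>] permutes_in_image[OF \<pi>'] by auto
    have "En N (\<lambda>n. e n (\<pi> n) (\<pi>' n)) =
        (LINT \<omega>|M. En N (\<lambda>n. X (\<pi> n) \<omega> * Y (\<pi>' n) \<omega> * Z n (\<pi> n) (\<pi>' n) \<omega>))"
      unfolding e_def by (rule integral_En[symmetric]) (blast intro: int_XYZ im)
    moreover have "(LINT \<omega>|M. En N (\<lambda>n. X (\<pi> n) \<omega> * Y (\<pi>' n) \<omega>)) = En N (\<lambda>n. p (\<pi> n) (\<pi>' n))"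
      unfolding p_def by (rule integral_En) (blast intro: int_XY im)
    moreover have "(LINT \<omega>|M. En N (\<lambda>n. Z n (\<pi> n) (\<pi>' n) \<omega>)) = En N (\<lambda>n. y n (\<pi> n) (\<pi>' n))"
      unfolding y_def by (rule integral_En) (blast intro: int_Z im)
    ultimately show ?thesis
      using fact[OF \<pi> \<pi>'] by simp
  qed
  have offdiag: "p m m' = q" if "m \<in> {1..N}" "m' \<in> {1..N}" "m \<noteq> m'" for m m'
    unfolding q_def by (rule offdiag_eq_of_exchangeable[OF _ that], unfold p_def, rule exch)
  have XY_diag: "(LINT \<omega>|M. En N (\<lambda>n. X n \<omega> * Y n \<omega>)) = En N (\<lambda>n. p n n)"
    unfolding p_def by (rule integral_En) (rule int_XY)
  have XY_means: "(LINT \<omega>|M. En N (\<lambda>n. X n \<omega>) * En N (\<lambda>n. Y n \<omega>)) = En N (\<lambda>m. En N (p m))"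
    unfolding p_def by (rule integral_En_mult_En) (rule int_XY)
  have "(LINT \<omega>|M. En N (\<lambda>n. \<Sum>m = 1..N. \<Sum>m' = 1..N. X m \<omega> * Y m' \<omega> * Z n m m' \<omega>)) =
      En N (\<lambda>n. \<Sum>m = 1..N. \<Sum>m' = 1..N. e n m m')"
    unfolding e_def by (rule integral_En_sum_sum) (rule int_XYZ)
  also have "\<dots> = En N (\<lambda>n. p n n) * En N (\<lambda>n. \<Sum>m = 1..N. y n m m) +
      q * (En N (\<lambda>n. \<Sum>m = 1..N. \<Sum>m' = 1..N. y n m m') - En N (\<lambda>n. \<Sum>m = 1..N. y n m m))"
    by (rule En_sum_sum_factorizing[OF fact_p offdiag])
  moreover have "(LINT \<omega>|M. En N (\<lambda>n. \<Sum>m = 1..N. Z n m m \<omega>)) = En N (\<lambda>n. \<Sum>m = 1..N. y n m m)"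
    unfolding y_def by (rule integral_En_sum) (rule int_Z)
  moreover have "(LINT \<omega>|M. En N (\<lambda>n. \<Sum>m = 1..N. \<Sum>m' = 1..N. Z n m m' \<omega>)) =
      En N (\<lambda>n. \<Sum>m = 1..N. \<Sum>m' = 1..N. y n m m')"
    unfolding y_def by (rule integral_En_sum_sum) (rule int_Z)
  ultimately show ?thesis
    unfolding XY_diag XY_means q_def by simp
qed

lemma block_index_bounds:
  fixes i p q :: nat
  assumes "i \<in> {1..p * q}"
  shows "(i - 1) mod p + 1 \<in> {1..p}" "(i - 1) div p + 1 \<in> {1..q}"
proof -
  have "p > 0" using assms by (cases p) auto
  then show "(i - 1) mod p + 1 \<in> {1..p}" by (auto simp: Suc_le_eq)
  show "(i - 1) div p + 1 \<in> {1..q}"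
    using assms \<open>p > 0\<close> by (auto simp: Suc_le_eq less_mult_imp_div_less mult.commute)
qed

context
  fixes M :: "'w measure" and L N :: nat and C :: "nat \<Rightarrow> nat"
    and abar :: "nat \<Rightarrow> nat \<Rightarrow> nat \<Rightarrow> 'w \<Rightarrow> real"
    and D :: "nat \<Rightarrow> nat \<Rightarrow> nat \<Rightarrow> nat \<Rightarrow> nat \<Rightarrow> nat \<Rightarrow> nat \<Rightarrow> 'w \<Rightarrow> real"
  assumes meas_a: "\<And>l b m. l \<in> {1..L} \<Longrightarrow> b \<in> {1..C (l - 1) + 1} \<Longrightarrow> m \<in> {1..N} \<Longrightarrow>
      abar l b m \<in> borel_measurable M"
    and meas_D: "\<And>n l l' a m c m'. n \<in> {1..N} \<Longrightarrow> l \<in> {1..L} \<Longrightarrow> l' \<in> {1..L} \<Longrightarrow>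
      a \<in> {1..C l} \<Longrightarrow> c \<in> {1..C l'} \<Longrightarrow> m \<in> {1..N} \<Longrightarrow> m' \<in> {1..N} \<Longrightarrow>
      D n l l' a m c m' \<in> borel_measurable M"
begin

lemma fam_measurable:
  assumes \<sigma>: "\<sigma> permutes {1..N}"
  shows "fam L N C abar D \<sigma> \<in> M \<rightarrow>\<^sub>M PiM (fam_idx L N C) (\<lambda>_. borel)"
  unfolding fam_def
proof (rule measurable_restrict)
  have im: "Suc 0 \<le> \<sigma> n \<and> \<sigma> n \<le> N" if "Suc 0 \<le> n" "n \<le> N" for n
    using that permutes_in_image[OF \<sigma>, of n] by auto
  fix x assume "x \<in> fam_idx L N C"
  then show "(\<lambda>\<omega>. case x of Inl (l, b, m) \<Rightarrow> abar l b (\<sigma> m) \<omega>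
      | Inr (l, l', a, c, n, m, m') \<Rightarrow> D (\<sigma> n) l l' a (\<sigma> m) c (\<sigma> m') \<omega>) \<in> borel_measurable M"
    by (auto simp: fam_idx_def im intro!: meas_a meas_D)
qed

lemma integral_abar_pair_permute:
  assumes exch: "distr M (PiM (fam_idx L N C) (\<lambda>_. borel)) (fam L N C abar D \<sigma>) =
      distr M (PiM (fam_idx L N C) (\<lambda>_. borel)) (fam L N C abar D id)"
    and \<sigma>: "\<sigma> permutes {1..N}"
    and l: "l \<in> {1..L}" and l': "l' \<in> {1..L}"
    and b: "b \<in> {1..C (l - 1) + 1}" and d: "d \<in> {1..C (l' - 1) + 1}"
  shows "(LINT \<omega>|M. abar l b (\<sigma> 1) \<omega> * abar l' d (\<sigma> 2) \<omega>) =
    (LINT \<omega>|M. abar l b 1 \<omega> * abar l' d 2 \<omega>)"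
proof (cases "N \<ge> 2")
  case True
  define g where "g x = x (Inl (l, b, 1)) * x (Inl (l', d, 2))"
    for x :: "(nat \<times> nat \<times> nat) + (nat \<times> nat \<times> nat \<times> nat \<times> nat \<times> nat \<times> nat) \<Rightarrow> real"
  have idx: "Inl (l, b, 1) \<in> fam_idx L N C" "Inl (l', d, 2) \<in> fam_idx L N C"
    using l l' b d True by (auto simp: fam_idx_def)
  have g: "g \<in> borel_measurable (PiM (fam_idx L N C) (\<lambda>_. borel))"
    unfolding g_def using idx by measurable
  have "(LINT \<omega>|M. abar l b (\<sigma> 1) \<omega> * abar l' d (\<sigma> 2) \<omega>) =
      integral\<^sup>L (distr M (PiM (fam_idx L N C) (\<lambda>_. borel)) (fam L N C abar D \<sigma>)) g"
    using idx by (simp add: integral_distr[OF fam_measurable[OF \<sigma>] g] g_def fam_def)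
  also have "\<dots> = integral\<^sup>L (distr M (PiM (fam_idx L N C) (\<lambda>_. borel)) (fam L N C abar D id)) g"
    by (simp only: exch)
  also have "\<dots> = (LINT \<omega>|M. abar l b 1 \<omega> * abar l' d 2 \<omega>)"
    using idx by (simp add: integral_distr[OF fam_measurable[OF permutes_id] g] g_def fam_def)
  finally show ?thesis .
next
  case False
  then have "{1..N} = {} \<or> {1..N} = {1}" by auto
  then have "\<sigma> = id" using \<sigma> by auto
  then show ?thesis by simp
qed

end

theorem theorem2:
  fixes M :: "'w measure" and L N :: nat and C :: "nat \<Rightarrow> nat"
    and abar :: "nat \<Rightarrow> nat \<Rightarrow> nat \<Rightarrow> 'w \<Rightarrow> real"
    and D :: "nat \<Rightarrow> nat \<Rightarrow> nat \<Rightarrow> nat \<Rightarrow> nat \<Rightarrow> nat \<Rightarrow> nat \<Rightarrow> 'w \<Rightarrow> real"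
  assumes P: "prob_space M"
    and N: "N \<ge> 1"
    and meas_a: "\<And>l b m. l \<in> {1..L} \<Longrightarrow> b \<in> {1..C (l - 1) + 1} \<Longrightarrow> m \<in> {1..N} \<Longrightarrow>
        abar l b m \<in> borel_measurable M"
    and meas_D: "\<And>n l l' a m c m'. n \<in> {1..N} \<Longrightarrow> l \<in> {1..L} \<Longrightarrow> l' \<in> {1..L} \<Longrightarrow>
        a \<in> {1..C l} \<Longrightarrow> c \<in> {1..C l'} \<Longrightarrow> m \<in> {1..N} \<Longrightarrow> m' \<in> {1..N} \<Longrightarrow>
        D n l l' a m c m' \<in> borel_measurable M"
    and int_aaD: "\<And>n l l' a b c d m m'. n \<in> {1..N} \<Longrightarrow> l \<in> {1..L} \<Longrightarrow> l' \<in> {1..L} \<Longrightarrow>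
        a \<in> {1..C l} \<Longrightarrow> c \<in> {1..C l'} \<Longrightarrow> b \<in> {1..C (l - 1) + 1} \<Longrightarrow> d \<in> {1..C (l' - 1) + 1} \<Longrightarrow>
        m \<in> {1..N} \<Longrightarrow> m' \<in> {1..N} \<Longrightarrow>
        integrable M (\<lambda>\<omega>. abar l b m \<omega> * abar l' d m' \<omega> * D n l l' a m c m' \<omega>)"
    and int_aa: "\<And>l l' b d m m'. l \<in> {1..L} \<Longrightarrow> l' \<in> {1..L} \<Longrightarrow>
        b \<in> {1..C (l - 1) + 1} \<Longrightarrow> d \<in> {1..C (l' - 1) + 1} \<Longrightarrow>
        m \<in> {1..N} \<Longrightarrow> m' \<in> {1..N} \<Longrightarrow>
        integrable M (\<lambda>\<omega>. abar l b m \<omega> * abar l' d m' \<omega>)"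
    and int_D: "\<And>n l l' a m c m'. n \<in> {1..N} \<Longrightarrow> l \<in> {1..L} \<Longrightarrow> l' \<in> {1..L} \<Longrightarrow>
        a \<in> {1..C l} \<Longrightarrow> c \<in> {1..C l'} \<Longrightarrow> m \<in> {1..N} \<Longrightarrow> m' \<in> {1..N} \<Longrightarrow>
        integrable M (D n l l' a m c m')"
    and exch: "\<And>\<sigma>. \<sigma> permutes {1..N} \<Longrightarrow>
        distr M (PiM (fam_idx L N C) (\<lambda>_. borel)) (fam L N C abar D \<sigma>) =
        distr M (PiM (fam_idx L N C) (\<lambda>_. borel)) (fam L N C abar D id)"
    and fact: "\<And>l l' a b c d \<pi> \<pi>'. l \<in> {1..L} \<Longrightarrow> l' \<in> {1..L} \<Longrightarrow>
        a \<in> {1..C l} \<Longrightarrow> c \<in> {1..C l'} \<Longrightarrow> b \<in> {1..C (l - 1) + 1} \<Longrightarrow> d \<in> {1..C (l' - 1) + 1} \<Longrightarrow>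
        \<pi> permutes {1..N} \<Longrightarrow> \<pi>' permutes {1..N} \<Longrightarrow>
        (LINT \<omega>|M. En N (\<lambda>n. abar l b (\<pi> n) \<omega> * abar l' d (\<pi>' n) \<omega> * D n l l' a (\<pi> n) c (\<pi>' n) \<omega>)) =
        (LINT \<omega>|M. En N (\<lambda>n. abar l b (\<pi> n) \<omega> * abar l' d (\<pi>' n) \<omega>)) *
        (LINT \<omega>|M. En N (\<lambda>n. D n l l' a (\<pi> n) c (\<pi>' n) \<omega>))"
  shows "\<forall>l \<in> {1..L}. \<forall>l' \<in> {1..L}.
           \<forall>i \<in> {1..C l * (C (l - 1) + 1)}. \<forall>j \<in> {1..C l' * (C (l' - 1) + 1)}.
      Hess_blk M N C abar D l l' i j =
        khatri_rao C (Abar_blk M N abar) (H'_blk M N D) l l' i j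
        + (1 / real (max (N - 1) 1)) *
          khatri_rao C (\<lambda>l l' b d. real N * Abar'_blk M N abar l l' b d - Abar_blk M N abar l l' b d)
                       (\<lambda>l l' a c. H''_blk M N D l l' a c - H'_blk M N D l l' a c) l l' i j"
proof -
  have entry: "Hess_entry M N abar D l l' a b c d =
      Abar_blk M N abar l l' b d * H'_blk M N D l l' a c
      + 1 / real (max (N - 1) 1) *
        ((real N * Abar'_blk M N abar l l' b d - Abar_blk M N abar l l' b d) *
         (H''_blk M N D l l' a c - H'_blk M N D l l' a c))"
    if l: "l \<in> {1..L}" and l': "l' \<in> {1..L}" and a: "a \<in> {1..C l}" and c: "c \<in> {1..C l'}"
      and b: "b \<in> {1..C (l - 1) + 1}" and d: "d \<in> {1..C (l' - 1) + 1}" for l l' a b c d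
    unfolding Hess_entry_def Abar_blk_def Abar'_blk_def H'_blk_def H''_blk_def
  proof (rule integral_En_double_sum_decomposition)
    show "(LINT \<omega>|M. abar l b (\<sigma> 1) \<omega> * abar l' d (\<sigma> 2) \<omega>) = (LINT \<omega>|M. abar l b 1 \<omega> * abar l' d 2 \<omega>)"
      if "\<sigma> permutes {1..N}" for \<sigma>
      using integral_abar_pair_permute[OF meas_a meas_D exch[OF that] that l l' b d] .
  qed (use int_aaD[OF _ l l' a c b d] int_aa[OF l l' b d] int_D[OF _ l l' a c] fact[OF l l' a c b d] in auto)
  show ?thesis
    unfolding Hess_blk_def khatri_rao_def kron_def
    by (intro ballI entry) (blast intro: block_index_bounds)+
qed

end
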